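(* Let $b_1(\sigma),\dots,b_m(\sigma)$ be arbitrary functions on $\Sigma_N=\{-1,1\}^N$ taking values in $[-1,1]$. Then for any $k\ge1$ and any distinct indices $j_1,\dots,j_k\in\{2,\dots,N\}$, $$\mathbb{E}\bigl(g_{1j_1}g_{1j_2}\cdots g_{1j_k}\langle b_1\rangle\langle b_2\rangle\cdots\langle b_m\rangle\bigr) \le \frac{C(m,k)\beta^k}{N^{k/2}},$$ where $C(m,k)$ is a constant depending only on $m$ and $k$.
   Context: Sherrington–Kirkpatrick model: for a positive integer $N$, let $g=(g_{ij})_{1\le i<j\le N}$ be i.i.d. standard Gaussian random variables (the disorder), $\beta>0$, $h\in\mathbb{R}$. Given $g$, the Gibbs measure on $\Sigma_N$ is $G_N(\sigma)=Z_N^{-1}\exp\bigl(\frac{\beta}{\sqrt N}\sum_{1\le i<j\le N} g_{ij}\sigma_i\sigma_j + h\sum_{i=1}^N\sigma_i\bigr)$, with $Z_N$ the normalizing constant. $\langle b\rangle := \sum_\sigma b(\sigma)G_N(\sigma)$ is the quenched average, and $\mathbb{E}$ is expectation over the disorder. *)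

theory Defs
  imports "HOL-Probability.Probability"
begin

definition pairs :: "nat \<Rightarrow> (nat \<times> nat) set" where
  "pairs N = {(i, j). 1 \<le> i \<and> i < j \<and> j \<le> N}"

definition disorder :: "nat \<Rightarrow> (nat \<times> nat \<Rightarrow> real) measure" where
  "disorder N = PiM (pairs N) (\<lambda>_. density lborel std_normal_density)"

definition spins :: "nat \<Rightarrow> (nat \<Rightarrow> real) set" where
  "spins N = PiE {1..N} (\<lambda>_. {-1, 1})"

definition sk_weight :: "nat \<Rightarrow> real \<Rightarrow> real \<Rightarrow> (nat \<times> nat \<Rightarrow> real) \<Rightarrow> (nat \<Rightarrow> real) \<Rightarrow> real" where
  "sk_weight N \<beta> h g \<sigma> =
     exp (\<beta> / sqrt (real N) * (\<Sum>p\<in>pairs N. g p * \<sigma> (fst p) * \<sigma> (snd p))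
          + h * (\<Sum>i\<in>{1..N}. \<sigma> i))"

definition gibbs_avg :: "nat \<Rightarrow> real \<Rightarrow> real \<Rightarrow> (nat \<times> nat \<Rightarrow> real) \<Rightarrow> ((nat \<Rightarrow> real) \<Rightarrow> real) \<Rightarrow> real" where
  "gibbs_avg N \<beta> h g b =
     (\<Sum>\<sigma>\<in>spins N. b \<sigma> * sk_weight N \<beta> h g \<sigma>) / (\<Sum>\<sigma>\<in>spins N. sk_weight N \<beta> h g \<sigma>)"

end

theory Submission
  imports Defs
begin

text \<open>Write \<open>X = \<Prod>\<^sub>r g(1, j r)\<close> and \<open>F = \<Prod>\<^sub>l \<langle>b l\<rangle>\<close>. Each \<open>g(1, j r)\<close> is a symmetric
  Gaussian and \<open>X\<close> is odd in it, so \<open>E(X F) = E(X D F)\<close>, where \<open>D\<close> replaces \<open>F\<close> by its part that is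
  odd in each of the \<open>k\<close> couplings, i.e. applies \<open>F \<mapsto> (F - F \<circ> flip\<^sub>r) / 2\<close> for every \<open>r\<close>. As a
  function of the external fields \<open>y r = \<beta> / \<surd>N * g(1, j r)\<close> acting on \<open>\<sigma> 1 * \<sigma> (j r)\<close>, \<open>F\<close> has
  partial derivatives of every order bounded by constants depending only on \<open>m\<close> and the order.
  Applying the mean value theorem once per flip gives \<open>\<bar>D F\<bar> \<le> C(m,k) \<Prod>\<^sub>r \<bar>y r\<bar>\<close>, hence
  \<open>E(X F) \<le> C(m,k) (\<beta> / \<surd>N)\<^sup>k E(\<Prod>\<^sub>r g(1, j r)\<^sup>2) = C(m,k) \<beta>\<^sup>k / N powr (k/2)\<close>.\<close>

section \<open>Functions with bounded partial derivatives\<close>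

definition has_partial_deriv :: "'i \<Rightarrow> (('i \<Rightarrow> real) \<Rightarrow> real) \<Rightarrow> (('i \<Rightarrow> real) \<Rightarrow> real) \<Rightarrow> bool" where
  "has_partial_deriv r Q Q' \<longleftrightarrow>
     (\<forall>y u. ((\<lambda>v. Q (y(r := v))) has_real_derivative Q' (y(r := u))) (at u))"

lemma has_partial_deriv_const: "has_partial_deriv r (\<lambda>_. c) (\<lambda>_. 0)"
  by (simp add: has_partial_deriv_def)

lemma has_partial_deriv_minus:
  "has_partial_deriv r Q Q' \<Longrightarrow> has_partial_deriv r (\<lambda>y. - Q y) (\<lambda>y. - Q' y)"
  by (auto simp: has_partial_deriv_def intro: derivative_intros)

lemma has_partial_deriv_add:
  "has_partial_deriv r Q1 Q1' \<Longrightarrow> has_partial_deriv r Q2 Q2' \<Longrightarrow>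
   has_partial_deriv r (\<lambda>y. Q1 y + Q2 y) (\<lambda>y. Q1' y + Q2' y)"
  by (auto simp: has_partial_deriv_def intro: derivative_intros)

lemma has_partial_deriv_mult:
  "has_partial_deriv r Q1 Q1' \<Longrightarrow> has_partial_deriv r Q2 Q2' \<Longrightarrow>
   has_partial_deriv r (\<lambda>y. Q1 y * Q2 y) (\<lambda>y. Q1' y * Q2 y + Q1 y * Q2' y)"
  unfolding has_partial_deriv_def
  by (auto intro!: derivative_eq_intros simp: algebra_simps)

fun bounded_partials :: "'i set \<Rightarrow> nat \<Rightarrow> (('i \<Rightarrow> real) \<Rightarrow> real) \<Rightarrow> (nat \<Rightarrow> real) \<Rightarrow> bool" where
  "bounded_partials R 0 Q C \<longleftrightarrow> (\<forall>y. \<bar>Q y\<bar> \<le> C 0)"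
| "bounded_partials R (Suc k) Q C \<longleftrightarrow> (\<forall>y. \<bar>Q y\<bar> \<le> C 0) \<and>
     (\<forall>r\<in>R. \<exists>Q'. has_partial_deriv r Q Q' \<and> bounded_partials R k Q' (\<lambda>i. C (Suc i)))"

lemma bounded_partials_abs_le: "bounded_partials R k Q C \<Longrightarrow> \<bar>Q y\<bar> \<le> C 0"
  by (cases k) auto

lemma bounded_partialsE:
  assumes "bounded_partials R (Suc k) Q C" "r \<in> R"
  obtains Q' where "has_partial_deriv r Q Q'" "bounded_partials R k Q' (\<lambda>i. C (Suc i))"
  using assms by auto

lemma bounded_partials_mono:
  "bounded_partials R k Q C \<Longrightarrow> (\<And>i. C i \<le> C' i) \<Longrightarrow> bounded_partials R k Q C'"
proof (induction k arbitrary: Q C C')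
  case 0
  then show ?case by (auto intro: order_trans)
next
  case (Suc k)
  have "\<bar>Q y\<bar> \<le> C' 0" for y
    using bounded_partials_abs_le[OF Suc.prems(1), of y] Suc.prems(2)[of 0] by linarith
  moreover have "\<exists>Q'. has_partial_deriv r Q Q' \<and> bounded_partials R k Q' (\<lambda>i. C' (Suc i))"
    if r: "r \<in> R" for r
  proof -
    obtain Q' where "has_partial_deriv r Q Q'" "bounded_partials R k Q' (\<lambda>i. C (Suc i))"
      using Suc.prems(1) r by (rule bounded_partialsE)
    moreover have "bounded_partials R k Q' (\<lambda>i. C' (Suc i))"
      using calculation(2) by (rule Suc.IH) (use Suc.prems(2) in simp)
    ultimately show ?thesis by blast
  qed
  ultimately show ?case by simp
qed

lemma bounded_partials_Suc_D: "bounded_partials R (Suc k) Q C \<Longrightarrow> bounded_partials R k Q C"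
proof (induction k arbitrary: Q C)
  case 0
  then show ?case by simp
next
  case (Suc k)
  have "\<exists>Q'. has_partial_deriv r Q Q' \<and> bounded_partials R k Q' (\<lambda>i. C (Suc i))"
    if r: "r \<in> R" for r
  proof -
    obtain Q' where "has_partial_deriv r Q Q'" "bounded_partials R (Suc k) Q' (\<lambda>i. C (Suc i))"
      using Suc.prems r by (rule bounded_partialsE)
    then show ?thesis by (intro exI[of _ Q'] conjI Suc.IH)
  qed
  then show ?case using Suc.prems by simp
qed

lemma bounded_partials_const:
  "(\<And>i. \<bar>c\<bar> \<le> C i) \<Longrightarrow> bounded_partials R k (\<lambda>_. c) C"
proof (induction k arbitrary: c C)
  case 0
  then show ?case by simp
next
  case (Suc k)
  have "0 \<le> C (Suc i)" for i
    using Suc.prems[of "Suc i"] by linarith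
  then have "bounded_partials R k (\<lambda>_. 0) (\<lambda>i. C (Suc i))"
    using Suc.IH[of 0] by simp
  moreover have "\<bar>c\<bar> \<le> C 0"
    using Suc.prems by simp
  ultimately show ?case
    using has_partial_deriv_const[of _ c]
    by (auto simp only: bounded_partials.simps intro!: exI[of _ "\<lambda>_. 0"])
qed

lemma bounded_partials_minus:
  "bounded_partials R k Q C \<Longrightarrow> bounded_partials R k (\<lambda>y. - Q y) C"
proof (induction k arbitrary: Q C)
  case 0
  then show ?case by simp
next
  case (Suc k)
  have "\<exists>Q'. has_partial_deriv r (\<lambda>y. - Q y) Q' \<and> bounded_partials R k Q' (\<lambda>i. C (Suc i))"
    if r: "r \<in> R" for r
  proof -
    obtain Q' where "has_partial_deriv r Q Q'" "bounded_partials R k Q' (\<lambda>i. C (Suc i))"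
      using Suc.prems r by (rule bounded_partialsE)
    then show ?thesis by (intro exI[of _ "\<lambda>y. - Q' y"] conjI has_partial_deriv_minus Suc.IH)
  qed
  then show ?case using Suc.prems by simp
qed

lemma bounded_partials_add:
  "bounded_partials R k Q1 C1 \<Longrightarrow> bounded_partials R k Q2 C2 \<Longrightarrow>
   bounded_partials R k (\<lambda>y. Q1 y + Q2 y) (\<lambda>i. C1 i + C2 i)"
proof (induction k arbitrary: Q1 Q2 C1 C2)
  case 0
  then show ?case by (auto intro: abs_triangle_ineq[THEN order_trans] add_mono)
next
  case (Suc k)
  have "\<bar>Q1 y + Q2 y\<bar> \<le> C1 0 + C2 0" for y
    using bounded_partials_abs_le[OF Suc.prems(1), of y] bounded_partials_abs_le[OF Suc.prems(2), of y]
    by (meson abs_triangle_ineq add_mono order_trans)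
  moreover have "\<exists>Q'. has_partial_deriv r (\<lambda>y. Q1 y + Q2 y) Q' \<and>
      bounded_partials R k Q' (\<lambda>i. C1 (Suc i) + C2 (Suc i))" if r: "r \<in> R" for r
  proof -
    obtain Q1' where "has_partial_deriv r Q1 Q1'" "bounded_partials R k Q1' (\<lambda>i. C1 (Suc i))"
      using Suc.prems(1) r by (rule bounded_partialsE)
    moreover obtain Q2' where "has_partial_deriv r Q2 Q2'" "bounded_partials R k Q2' (\<lambda>i. C2 (Suc i))"
      using Suc.prems(2) r by (rule bounded_partialsE)
    ultimately show ?thesis
      by (intro exI[of _ "\<lambda>y. Q1' y + Q2' y"] conjI has_partial_deriv_add Suc.IH)
  qed
  ultimately show ?case by simp
qed

lemma bounded_partials_diff:
  "bounded_partials R k Q1 C1 \<Longrightarrow> bounded_partials R k Q2 C2 \<Longrightarrow>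
   bounded_partials R k (\<lambda>y. Q1 y - Q2 y) (\<lambda>i. C1 i + C2 i)"
  using bounded_partials_add[OF _ bounded_partials_minus] by simp

text \<open>The factor \<open>2 ^ i\<close> absorbs the binomial coefficients of the Leibniz rule for
  \<open>i\<close>-th derivatives.\<close>

lemma bounded_partials_mult:
  assumes "bounded_partials R k Q1 C1" "bounded_partials R k Q2 C2"
    and "\<And>i. C1 i \<le> C1 (Suc i)" "\<And>i. C2 i \<le> C2 (Suc i)" "\<And>i. 0 \<le> C1 i" "\<And>i. 0 \<le> C2 i"
  shows "bounded_partials R k (\<lambda>y. Q1 y * Q2 y) (\<lambda>i. 2 ^ i * C1 i * C2 i)"
  using assms
proof (induction k arbitrary: Q1 Q2 C1 C2)
  case 0
  then show ?case by (auto simp: abs_mult intro: mult_mono)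
next
  case (Suc k)
  have "\<bar>Q1 y * Q2 y\<bar> \<le> C1 0 * C2 0" for y
    using bounded_partials_abs_le[OF Suc.prems(1), of y] bounded_partials_abs_le[OF Suc.prems(2), of y]
    by (simp add: abs_mult mult_mono)
  moreover have "\<exists>Q'. has_partial_deriv r (\<lambda>y. Q1 y * Q2 y) Q' \<and>
      bounded_partials R k Q' (\<lambda>i. 2 ^ Suc i * C1 (Suc i) * C2 (Suc i))" if r: "r \<in> R" for r
  proof -
    obtain Q1' where d1: "has_partial_deriv r Q1 Q1'" and b1: "bounded_partials R k Q1' (\<lambda>i. C1 (Suc i))"
      using Suc.prems(1) r by (rule bounded_partialsE)
    obtain Q2' where d2: "has_partial_deriv r Q2 Q2'" and b2: "bounded_partials R k Q2' (\<lambda>i. C2 (Suc i))"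
      using Suc.prems(2) r by (rule bounded_partialsE)
    have "bounded_partials R k (\<lambda>y. Q1' y * Q2 y) (\<lambda>i. 2 ^ i * C1 (Suc i) * C2 i)"
      using Suc.IH[OF b1 bounded_partials_Suc_D[OF Suc.prems(2)]] Suc.prems(3-6) by blast
    moreover have "bounded_partials R k (\<lambda>y. Q1 y * Q2' y) (\<lambda>i. 2 ^ i * C1 i * C2 (Suc i))"
      using Suc.IH[OF bounded_partials_Suc_D[OF Suc.prems(1)] b2] Suc.prems(3-6) by blast
    ultimately have "bounded_partials R k (\<lambda>y. Q1' y * Q2 y + Q1 y * Q2' y)
        (\<lambda>i. 2 ^ i * C1 (Suc i) * C2 i + 2 ^ i * C1 i * C2 (Suc i))"
      by (rule bounded_partials_add)
    moreover have "2 ^ i * C1 (Suc i) * C2 i + 2 ^ i * C1 i * C2 (Suc i)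
        \<le> 2 ^ Suc i * C1 (Suc i) * C2 (Suc i)" for i :: nat
    proof -
      have "C1 (Suc i) * C2 i \<le> C1 (Suc i) * C2 (Suc i)" "C1 i * C2 (Suc i) \<le> C1 (Suc i) * C2 (Suc i)"
        using Suc.prems(3-6) by (auto intro: mult_left_mono mult_right_mono)
      then show ?thesis by (simp add: mult.assoc) (smt (verit) mult_left_mono zero_le_power)
    qed
    ultimately have "bounded_partials R k (\<lambda>y. Q1' y * Q2 y + Q1 y * Q2' y)
        (\<lambda>i. 2 ^ Suc i * C1 (Suc i) * C2 (Suc i))"
      by (rule bounded_partials_mono)
    then show ?thesis
      using has_partial_deriv_mult[OF d1 d2] by blast
  qed
  ultimately show ?case by simp
qed

section \<open>Odd parts under sign flips\<close>

definition flip_coord :: "'i \<Rightarrow> ('i \<Rightarrow> real) \<Rightarrow> 'i \<Rightarrow> real" where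
  "flip_coord q y = y(q := - y q)"

lemma prod_flip_coord_reindex:
  assumes "finite K" "inj_on e K" "r \<in> K"
  shows "(\<Prod>r'\<in>K. flip_coord (e r) g (e r')) = - (\<Prod>r'\<in>K. g (e r'))"
proof -
  have "(\<Prod>r'\<in>K. flip_coord (e r) g (e r')) = (\<Prod>p\<in>e ` K. flip_coord (e r) g p)"
    using assms(2) by (simp add: prod.reindex)
  also have "\<dots> = flip_coord (e r) g (e r) * (\<Prod>p\<in>e ` K - {e r}. flip_coord (e r) g p)"
    using assms by (intro prod.remove) auto
  also have "\<dots> = - (g (e r) * (\<Prod>p\<in>e ` K - {e r}. g p))"
    by (simp add: flip_coord_def)
  also have "g (e r) * (\<Prod>p\<in>e ` K - {e r}. g p) = (\<Prod>p\<in>e ` K. g p)"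
    using assms by (intro prod.remove[symmetric]) auto
  also have "\<dots> = (\<Prod>r'\<in>K. g (e r'))"
    using assms(2) by (simp add: prod.reindex)
  finally show ?thesis .
qed

text \<open>For commuting involutions \<open>\<phi> r\<close>, \<open>odd_part \<phi> rs G\<close> is the component of \<open>G\<close> that is odd under
  every \<open>\<phi> r\<close> with \<open>r\<close> in \<open>rs\<close>.\<close>

fun odd_part :: "('r \<Rightarrow> 'a \<Rightarrow> 'a) \<Rightarrow> 'r list \<Rightarrow> ('a \<Rightarrow> real) \<Rightarrow> 'a \<Rightarrow> real" where
  "odd_part \<phi> [] G = G"
| "odd_part \<phi> (r # rs) G = (\<lambda>x. (odd_part \<phi> rs G x - odd_part \<phi> rs G (\<phi> r x)) / 2)"

lemma abs_odd_part_le: "(\<And>x. \<bar>G x\<bar> \<le> B) \<Longrightarrow> \<bar>odd_part \<phi> rs G x\<bar> \<le> B"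
proof (induction rs arbitrary: x)
  case Nil
  then show ?case by simp
next
  case (Cons r rs)
  have "\<bar>odd_part \<phi> rs G x\<bar> \<le> B" "\<bar>odd_part \<phi> rs G (\<phi> r x)\<bar> \<le> B"
    using Cons by auto
  then show ?case by simp
qed

lemma odd_part_measurable:
  assumes "G \<in> borel_measurable M" "\<And>r. r \<in> set rs \<Longrightarrow> \<phi> r \<in> measurable M M"
  shows "odd_part \<phi> rs G \<in> borel_measurable M"
  using assms(2)
proof (induction rs)
  case Nil
  then show ?case using assms(1) by simp
next
  case (Cons r rs)
  then have [measurable]: "odd_part \<phi> rs G \<in> borel_measurable M" "\<phi> r \<in> measurable M M"
    by auto
  show ?case unfolding odd_part.simps by measurable
qed

lemma odd_part_comp:
  assumes "\<And>r x. r \<in> set rs \<Longrightarrow> \<Phi> (\<phi> r x) = \<Phi> x"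
    and "\<And>r x. r \<in> set rs \<Longrightarrow> Y (\<phi> r x) = \<psi> r (Y x)"
  shows "odd_part \<phi> rs (\<lambda>x. \<Phi> x (Y x)) x = odd_part \<psi> rs (\<Phi> x) (Y x)"
  using assms by (induction rs arbitrary: x) auto

lemma has_partial_deriv_odd_part:
  assumes "r \<notin> set rs" "has_partial_deriv r Q Q'"
  shows "has_partial_deriv r (odd_part flip_coord rs Q) (odd_part flip_coord rs Q')"
  using assms
proof (induction rs)
  case Nil
  then show ?case by simp
next
  case (Cons r' rs)
  then have IH: "has_partial_deriv r (odd_part flip_coord rs Q) (odd_part flip_coord rs Q')"
    and "r \<noteq> r'" by auto
  then have flip: "flip_coord r' (y(r := v)) = (flip_coord r' y)(r := v)" for y v
    by (auto simp: flip_coord_def fun_eq_iff)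
  show ?case
    using IH unfolding has_partial_deriv_def odd_part.simps flip
    by (auto intro!: derivative_eq_intros)
qed

lemma abs_odd_diff_le:
  fixes f :: "real \<Rightarrow> real"
  assumes "\<And>u. (f has_real_derivative f' u) (at u)" "\<And>u. \<bar>f' u\<bar> \<le> B"
  shows "\<bar>f a - f (- a)\<bar> \<le> 2 * \<bar>a\<bar> * B"
proof (cases "a = 0")
  case True
  then show ?thesis using assms(2)[of 0] by simp
next
  case False
  then obtain z where "f \<bar>a\<bar> - f (- \<bar>a\<bar>) = (\<bar>a\<bar> - - \<bar>a\<bar>) * f' z"
    using MVT2[of "- \<bar>a\<bar>" "\<bar>a\<bar>" f f'] assms(1) by auto
  moreover have "\<bar>f a - f (- a)\<bar> = \<bar>f \<bar>a\<bar> - f (- \<bar>a\<bar>)\<bar>"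
    by (cases "a \<ge> 0") auto
  ultimately show ?thesis
    using assms(2)[of z] by (simp add: abs_mult mult_left_mono)
qed

text \<open>Each flip costs one derivative: by the mean value theorem the odd part in \<open>y r\<close> is at most
  \<open>\<bar>y r\<bar>\<close> times a bound on \<open>\<partial>\<^sub>r Q\<close>.\<close>

lemma abs_odd_part_flip_coord_le:
  assumes "bounded_partials R k Q C" "distinct rs" "set rs \<subseteq> R" "length rs \<le> k"
  shows "\<bar>odd_part flip_coord rs Q y\<bar> \<le> C (length rs) * (\<Prod>r\<in>set rs. \<bar>y r\<bar>)"
  using assms
proof (induction rs arbitrary: k Q C y)
  case Nil
  then show ?case using bounded_partials_abs_le by simp
next
  case (Cons r rs)
  then obtain k' where k: "k = Suc k'" by (cases k) auto
  have r: "r \<in> R" "r \<notin> set rs" using Cons.prems by auto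
  obtain Q' where dQ: "has_partial_deriv r Q Q'" and bQ': "bounded_partials R k' Q' (\<lambda>i. C (Suc i))"
    using Cons.prems(1) r(1) unfolding k by (rule bounded_partialsE)
  define f where "f = (\<lambda>v. odd_part flip_coord rs Q (y(r := v)))"
  have "(f has_real_derivative odd_part flip_coord rs Q' (y(r := u))) (at u)" for u
    using has_partial_deriv_odd_part[OF r(2) dQ] by (simp add: has_partial_deriv_def f_def)
  moreover have "\<bar>odd_part flip_coord rs Q' (y(r := u))\<bar> \<le> C (Suc (length rs)) * (\<Prod>r\<in>set rs. \<bar>y r\<bar>)" for u
  proof -
    have IH: "\<bar>odd_part flip_coord rs Q' z\<bar> \<le> C (Suc (length rs)) * (\<Prod>r'\<in>set rs. \<bar>z r'\<bar>)"
      for z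
      using Cons.IH[OF bQ'] Cons.prems k by auto
    have "\<bar>odd_part flip_coord rs Q' (y(r := u))\<bar>
        \<le> C (Suc (length rs)) * (\<Prod>r'\<in>set rs. \<bar>(y(r := u)) r'\<bar>)"
      by (rule IH)
    also have "(\<Prod>r'\<in>set rs. \<bar>(y(r := u)) r'\<bar>) = (\<Prod>r'\<in>set rs. \<bar>y r'\<bar>)"
      using r(2) by (intro prod.cong) auto
    finally show ?thesis .
  qed
  ultimately have "\<bar>f (y r) - f (- y r)\<bar> \<le> 2 * \<bar>y r\<bar> * (C (Suc (length rs)) * (\<Prod>r\<in>set rs. \<bar>y r\<bar>))"
    by (rule abs_odd_diff_le)
  moreover have "odd_part flip_coord (r # rs) Q y = (f (y r) - f (- y r)) / 2"
    by (simp add: f_def flip_coord_def)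
  ultimately show ?case using r(2) by (simp add: mult_ac)
qed

lemma integrable_mult_bounded:
  fixes X H :: "'a \<Rightarrow> real"
  assumes "integrable M X" "H \<in> borel_measurable M" "\<And>x. \<bar>H x\<bar> \<le> B"
  shows "integrable M (\<lambda>x. X x * H x)"
proof (rule Bochner_Integration.integrable_bound)
  show "integrable M (\<lambda>x. B * X x)" using assms(1) by simp
  show "(\<lambda>x. X x * H x) \<in> borel_measurable M"
    using borel_measurable_integrable[OF assms(1)] assms(2) by measurable
  have "\<bar>X x * H x\<bar> \<le> \<bar>B * X x\<bar>" for x
  proof -
    have "\<bar>H x\<bar> * \<bar>X x\<bar> \<le> B * \<bar>X x\<bar>"
      using assms(3) by (rule mult_right_mono) simp
    also have "\<dots> \<le> \<bar>B\<bar> * \<bar>X x\<bar>" by (simp add: mult_right_mono)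
    finally show ?thesis by (simp add: abs_mult mult.commute)
  qed
  then show "AE x in M. norm (X x * H x) \<le> norm (B * X x)" by simp
qed

lemma integral_mult_comp_odd:
  fixes X H :: "'a \<Rightarrow> real"
  assumes [measurable]: "\<phi> \<in> measurable M M" "H \<in> borel_measurable M"
    and "distr M M \<phi> = M" "integrable M X" "\<And>x. X (\<phi> x) = - X x"
  shows "(\<integral>x. X x * H (\<phi> x) \<partial>M) = - (\<integral>x. X x * H x \<partial>M)"
proof -
  have [measurable]: "X \<in> borel_measurable M"
    using assms(4) by (rule borel_measurable_integrable)
  have "(\<integral>x. X x * H x \<partial>M) = (\<integral>x. X x * H x \<partial>distr M M \<phi>)"
    using assms(3) by simp
  also have "\<dots> = (\<integral>x. X (\<phi> x) * H (\<phi> x) \<partial>M)"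
    by (rule integral_distr) measurable
  also have "\<dots> = - (\<integral>x. X x * H (\<phi> x) \<partial>M)"
    using assms(5) by simp
  finally show ?thesis by simp
qed

lemma integral_mult_odd_part:
  fixes X G :: "'a \<Rightarrow> real"
  assumes \<phi>: "\<And>r. r \<in> set rs \<Longrightarrow> \<phi> r \<in> measurable M M" "\<And>r. r \<in> set rs \<Longrightarrow> distr M M (\<phi> r) = M"
    and X: "integrable M X" "\<And>r x. r \<in> set rs \<Longrightarrow> X (\<phi> r x) = - X x"
    and G: "G \<in> borel_measurable M" "\<And>x. \<bar>G x\<bar> \<le> B"
  shows "(\<integral>x. X x * odd_part \<phi> rs G x \<partial>M) = (\<integral>x. X x * G x \<partial>M)"
  using \<phi> X(2)
proof (induction rs)
  case Nil
  then show ?case by simp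
next
  case (Cons r rs)
  define H where "H = odd_part \<phi> rs G"
  have [measurable]: "\<phi> r \<in> measurable M M"
    using Cons.prems(1) by simp
  have [measurable]: "H \<in> borel_measurable M"
    unfolding H_def using Cons.prems(1) by (intro odd_part_measurable G(1)) auto
  have H_le: "\<bar>H x\<bar> \<le> B" for x
    unfolding H_def by (rule abs_odd_part_le[OF G(2)])
  have "(\<integral>x. X x * odd_part \<phi> (r # rs) G x \<partial>M) = (\<integral>x. (X x * H x - X x * H (\<phi> r x)) / 2 \<partial>M)"
    by (simp add: H_def right_diff_distrib)
  also have "\<dots> = ((\<integral>x. X x * H x \<partial>M) - (\<integral>x. X x * H (\<phi> r x) \<partial>M)) / 2"
    using integrable_mult_bounded[OF X(1) _ H_le, of "\<lambda>x. x"]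
      integrable_mult_bounded[OF X(1) _ H_le, of "\<phi> r"]
    by simp
  also have "\<dots> = (\<integral>x. X x * H x \<partial>M)"
    using integral_mult_comp_odd[of "\<phi> r" M H X] Cons.prems X(1) by simp
  finally show ?case
    using Cons by (simp add: H_def)
qed

section \<open>Gibbs averages as functions of external fields\<close>

text \<open>Since \<open>\<partial>\<^sub>r\<langle>f\<rangle> = \<langle>f s\<^sub>r\<rangle> - \<langle>f\<rangle>\<langle>s\<^sub>r\<rangle>\<close>, the \<open>i\<close>-th partial derivatives of a Gibbs average of a
  function bounded by 1 are bounded by \<open>gibbs_deriv_bound i\<close>.\<close>

fun gibbs_deriv_bound :: "nat \<Rightarrow> real" where
  "gibbs_deriv_bound 0 = 1"
| "gibbs_deriv_bound (Suc i) = gibbs_deriv_bound i + 2 ^ i * gibbs_deriv_bound i ^ 2"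

lemma one_le_gibbs_deriv_bound: "1 \<le> gibbs_deriv_bound i"
  by (induction i) (simp_all add: add_increasing2)

lemma gibbs_deriv_bound_le_Suc: "gibbs_deriv_bound i \<le> gibbs_deriv_bound (Suc i)"
  by simp

lemma gibbs_prod_bound_mono: "(2 ^ i * gibbs_deriv_bound i) ^ n \<le> (2 ^ Suc i * gibbs_deriv_bound (Suc i)) ^ n"
  using one_le_gibbs_deriv_bound[of i] gibbs_deriv_bound_le_Suc[of i]
  by (intro power_mono mult_mono) auto

locale field_gibbs =
  fixes S :: "'a set" and w :: "'a \<Rightarrow> real" and s :: "'i \<Rightarrow> 'a \<Rightarrow> real" and R :: "'i set"
  assumes finite_S: "finite S" and S_ne: "S \<noteq> {}" and w_pos: "\<And>\<sigma>. \<sigma> \<in> S \<Longrightarrow> 0 < w \<sigma>"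
    and abs_s_le: "\<And>r \<sigma>. r \<in> R \<Longrightarrow> \<sigma> \<in> S \<Longrightarrow> \<bar>s r \<sigma>\<bar> \<le> 1"
    and finite_R: "finite R"
begin

definition weight :: "('i \<Rightarrow> real) \<Rightarrow> 'a \<Rightarrow> real" where
  "weight y \<sigma> = w \<sigma> * exp (\<Sum>r\<in>R. y r * s r \<sigma>)"

definition avg :: "('i \<Rightarrow> real) \<Rightarrow> ('a \<Rightarrow> real) \<Rightarrow> real" where
  "avg y f = (\<Sum>\<sigma>\<in>S. f \<sigma> * weight y \<sigma>) / (\<Sum>\<sigma>\<in>S. weight y \<sigma>)"

lemma weight_pos: "\<sigma> \<in> S \<Longrightarrow> 0 < weight y \<sigma>"
  using w_pos by (simp add: weight_def)

lemma sum_weight_pos: "0 < (\<Sum>\<sigma>\<in>S. weight y \<sigma>)"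
  using weight_pos finite_S S_ne by (intro sum_pos) auto

lemma abs_avg_le:
  assumes "\<And>\<sigma>. \<sigma> \<in> S \<Longrightarrow> \<bar>f \<sigma>\<bar> \<le> 1"
  shows "\<bar>avg y f\<bar> \<le> 1"
proof -
  have "\<bar>\<Sum>\<sigma>\<in>S. f \<sigma> * weight y \<sigma>\<bar> \<le> (\<Sum>\<sigma>\<in>S. \<bar>f \<sigma> * weight y \<sigma>\<bar>)"
    by (rule sum_abs)
  also have "\<dots> = (\<Sum>\<sigma>\<in>S. \<bar>f \<sigma>\<bar> * weight y \<sigma>)"
    by (intro sum.cong) (auto simp: abs_mult abs_of_pos[OF weight_pos])
  also have "\<dots> \<le> (\<Sum>\<sigma>\<in>S. weight y \<sigma>)"
    using assms weight_pos by (intro sum_mono) (simp add: less_imp_le mult_left_le_one_le)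
  finally show ?thesis
    using sum_weight_pos[of y] by (simp add: avg_def abs_divide)
qed

lemma weight_has_derivative:
  assumes "r \<in> R"
  shows "((\<lambda>v. weight (y(r := v)) \<sigma>) has_real_derivative weight (y(r := u)) \<sigma> * s r \<sigma>) (at u)"
proof -
  have sum: "(\<Sum>r'\<in>R. (y(r := v)) r' * s r' \<sigma>) = v * s r \<sigma> + (\<Sum>r'\<in>R - {r}. y r' * s r' \<sigma>)" for v
    using finite_R assms by (simp add: sum.remove)
  show ?thesis
    unfolding weight_def sum by (auto intro!: derivative_eq_intros)
qed

lemma has_partial_deriv_avg:
  assumes "r \<in> R"
  shows "has_partial_deriv r (\<lambda>y. avg y f) (\<lambda>y. avg y (\<lambda>\<sigma>. f \<sigma> * s r \<sigma>) - avg y f * avg y (s r))"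
  unfolding has_partial_deriv_def
proof (intro allI)
  fix y u
  define Z where "Z = (\<Sum>\<sigma>\<in>S. weight (y(r := u)) \<sigma>)"
  have "0 < Z" unfolding Z_def by (rule sum_weight_pos)
  have "((\<lambda>v. avg (y(r := v)) f) has_real_derivative
      ((\<Sum>\<sigma>\<in>S. f \<sigma> * (weight (y(r := u)) \<sigma> * s r \<sigma>)) * Z
        - (\<Sum>\<sigma>\<in>S. f \<sigma> * weight (y(r := u)) \<sigma>) * (\<Sum>\<sigma>\<in>S. weight (y(r := u)) \<sigma> * s r \<sigma>)) / (Z * Z)) (at u)"
    unfolding avg_def Z_def
    by (intro DERIV_divide DERIV_sum DERIV_cmult weight_has_derivative assms)
      (use \<open>0 < Z\<close> Z_def in auto)
  then show "((\<lambda>v. avg (y(r := v)) f) has_real_derivative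
      avg (y(r := u)) (\<lambda>\<sigma>. f \<sigma> * s r \<sigma>) - avg (y(r := u)) f * avg (y(r := u)) (s r)) (at u)"
    using \<open>0 < Z\<close> by (simp add: avg_def Z_def[symmetric] diff_divide_distrib mult_ac)
qed

lemma bounded_partials_avg:
  "(\<And>\<sigma>. \<sigma> \<in> S \<Longrightarrow> \<bar>f \<sigma>\<bar> \<le> 1) \<Longrightarrow> bounded_partials R k (\<lambda>y. avg y f) gibbs_deriv_bound"
proof (induction k arbitrary: f)
  case 0
  then show ?case using abs_avg_le by simp
next
  case (Suc k)
  have "\<exists>Q'. has_partial_deriv r (\<lambda>y. avg y f) Q' \<and> bounded_partials R k Q' (\<lambda>i. gibbs_deriv_bound (Suc i))"
    if r: "r \<in> R" for r
  proof -
    have "\<bar>f \<sigma> * s r \<sigma>\<bar> \<le> 1" "\<bar>s r \<sigma>\<bar> \<le> 1" if "\<sigma> \<in> S" for \<sigma>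
      using Suc.prems[OF that] abs_s_le[OF r that] by (auto simp: abs_mult intro: mult_le_one)
    then have "bounded_partials R k (\<lambda>y. avg y (\<lambda>\<sigma>. f \<sigma> * s r \<sigma>) - avg y f * avg y (s r))
        (\<lambda>i. gibbs_deriv_bound i + 2 ^ i * gibbs_deriv_bound i * gibbs_deriv_bound i)"
      using Suc one_le_gibbs_deriv_bound gibbs_deriv_bound_le_Suc
      by (intro bounded_partials_diff bounded_partials_mult) (auto intro: order_trans[OF zero_le_one])
    then show ?thesis
      using has_partial_deriv_avg[OF r, of f] by (auto simp: power2_eq_square mult.assoc)
  qed
  then show ?case using abs_avg_le Suc.prems by simp
qed

lemma bounded_partials_prod_avg:
  assumes "finite L" "\<And>l \<sigma>. l \<in> L \<Longrightarrow> \<sigma> \<in> S \<Longrightarrow> \<bar>b l \<sigma>\<bar> \<le> 1"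
  shows "bounded_partials R k (\<lambda>y. \<Prod>l\<in>L. avg y (b l)) (\<lambda>i. (2 ^ i * gibbs_deriv_bound i) ^ card L)"
  using assms
proof (induction L rule: finite_induct)
  case empty
  then show ?case by (simp add: bounded_partials_const)
next
  case (insert l L)
  have "0 \<le> (2 ^ i * gibbs_deriv_bound i) ^ n" for i n :: nat
    using one_le_gibbs_deriv_bound[of i] by simp
  then have "bounded_partials R k (\<lambda>y. avg y (b l) * (\<Prod>l\<in>L. avg y (b l)))
      (\<lambda>i. 2 ^ i * gibbs_deriv_bound i * (2 ^ i * gibbs_deriv_bound i) ^ card L)"
    using insert one_le_gibbs_deriv_bound gibbs_prod_bound_mono
    by (intro bounded_partials_mult bounded_partials_avg) (auto intro: order_trans[OF zero_le_one])
  then show ?case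
    using insert by (simp add: mult.assoc)
qed

lemma abs_odd_part_prod_avg_le:
  assumes "finite L" "\<And>l \<sigma>. l \<in> L \<Longrightarrow> \<sigma> \<in> S \<Longrightarrow> \<bar>b l \<sigma>\<bar> \<le> 1"
    and "distinct rs" "set rs \<subseteq> R"
  shows "\<bar>odd_part flip_coord rs (\<lambda>y. \<Prod>l\<in>L. avg y (b l)) y\<bar>
    \<le> (2 ^ length rs * gibbs_deriv_bound (length rs)) ^ card L * (\<Prod>r\<in>set rs. \<bar>y r\<bar>)"
  using abs_odd_part_flip_coord_le[OF bounded_partials_prod_avg[OF assms(1,2)] assms(3,4) order_refl]
  by simp

end

section \<open>Sign flips of Gaussian coordinates\<close>

lemma distr_std_normal_uminus:
  "distr std_normal_distribution std_normal_distribution uminus = std_normal_distribution"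
proof -
  have "distr std_normal_distribution std_normal_distribution uminus
      = distr (density (distr lborel borel uminus) std_normal_density) lborel uminus"
    by (intro distr_cong) (simp_all add: lborel_distr_uminus)
  also have "\<dots> = density lborel (\<lambda>x. std_normal_density (- x))"
    using distr_density_distr[of uminus lborel borel uminus "\<lambda>x. ennreal (std_normal_density x)"]
    by (simp add: comp_def)
  also have "(\<lambda>x. std_normal_density (- x)) = std_normal_density"
    by (simp add: fun_eq_iff normal_density_def)
  finally show ?thesis .
qed

lemma distr_PiM_coordinatewise:
  assumes M: "prob_space M" and fin: "finite I"
    and f[measurable]: "\<And>i. f i \<in> measurable M M"
    and inv: "\<And>i. i \<in> I \<Longrightarrow> distr M M (f i) = M"
  shows "distr (PiM I (\<lambda>_. M)) (PiM I (\<lambda>_. M)) (\<lambda>x. \<lambda>i\<in>I. f i (x i)) = PiM I (\<lambda>_. M)"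
proof -
  interpret P: product_prob_space "\<lambda>_. M" by (intro product_prob_spaceI M)
  have meas: "(\<lambda>x. \<lambda>i\<in>I. f i (x i)) \<in> measurable (PiM I (\<lambda>_. M)) (PiM I (\<lambda>_. M))"
    by measurable
  show ?thesis
  proof (rule P.PiM_eqI[OF fin])
    fix A assume A: "\<And>i. i \<in> I \<Longrightarrow> A i \<in> sets M"
    have "emeasure (distr (PiM I (\<lambda>_. M)) (PiM I (\<lambda>_. M)) (\<lambda>x. \<lambda>i\<in>I. f i (x i))) (Pi\<^sub>E I A) =
          emeasure (PiM I (\<lambda>_. M)) ((\<lambda>x. \<lambda>i\<in>I. f i (x i)) -` Pi\<^sub>E I A \<inter> space (PiM I (\<lambda>_. M)))"
      using A fin by (intro emeasure_distr meas) (auto intro: sets_PiM_I_finite)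
    also have "(\<lambda>x. \<lambda>i\<in>I. f i (x i)) -` Pi\<^sub>E I A \<inter> space (PiM I (\<lambda>_. M)) = Pi\<^sub>E I (\<lambda>i. f i -` A i \<inter> space M)"
      using A by (auto simp: space_PiM PiE_def Pi_def extensional_def)
    also have "emeasure (PiM I (\<lambda>_. M)) \<dots> = (\<Prod>i\<in>I. emeasure M (f i -` A i \<inter> space M))"
      using A fin by (intro P.emeasure_PiM) auto
    also have "\<dots> = (\<Prod>i\<in>I. emeasure (distr M M (f i)) (A i))"
      using A by (intro prod.cong emeasure_distr [symmetric]) auto
    also have "\<dots> = (\<Prod>i\<in>I. emeasure M (A i))"
      using inv by (intro prod.cong) auto
    finally show "emeasure (distr (PiM I (\<lambda>_. M)) (PiM I (\<lambda>_. M)) (\<lambda>x. \<lambda>i\<in>I. f i (x i))) (Pi\<^sub>E I A) =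
          (\<Prod>i\<in>I. emeasure M (A i))" .
  qed simp
qed

lemma measurable_flip_coord:
  assumes "q \<in> I"
  shows "flip_coord q \<in> measurable (PiM I (\<lambda>_. std_normal_distribution)) (PiM I (\<lambda>_. std_normal_distribution))"
proof -
  have "flip_coord q = (\<lambda>x i. if i = q then - x q else x i)"
    by (auto simp: flip_coord_def fun_eq_iff)
  also have "\<dots> \<in> measurable (PiM I (\<lambda>_. std_normal_distribution)) (PiM I (\<lambda>_. std_normal_distribution))"
  proof (rule measurable_PiM_single')
    show "(\<lambda>x. if i = q then - x q else x i)
        \<in> measurable (PiM I (\<lambda>_. std_normal_distribution)) std_normal_distribution" if "i \<in> I" for i
      using that assms by measurable
  next
    show "(\<lambda>x i. if i = q then - x q else x i) \<in> space (PiM I (\<lambda>_. std_normal_distribution))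
        \<rightarrow> (\<Pi>\<^sub>E i\<in>I. space std_normal_distribution)"
      using assms by (auto simp: space_PiM PiE_def extensional_def)
  qed
  finally show ?thesis .
qed

lemma distr_flip_coord_std_normal_PiM:
  assumes "finite I" "q \<in> I"
  shows "distr (PiM I (\<lambda>_. std_normal_distribution)) (PiM I (\<lambda>_. std_normal_distribution)) (flip_coord q)
    = PiM I (\<lambda>_. std_normal_distribution)"
proof -
  define f :: "'a \<Rightarrow> real \<Rightarrow> real" where "f i = (if i = q then uminus else (\<lambda>x. x))" for i
  have "distr (PiM I (\<lambda>_. std_normal_distribution)) (PiM I (\<lambda>_. std_normal_distribution)) (flip_coord q)
      = distr (PiM I (\<lambda>_. std_normal_distribution)) (PiM I (\<lambda>_. std_normal_distribution)) (\<lambda>x. \<lambda>i\<in>I. f i (x i))"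
    using assms(2) by (intro distr_cong) (auto simp: f_def flip_coord_def space_PiM PiE_def extensional_def fun_eq_iff)
  also have "\<dots> = PiM I (\<lambda>_. std_normal_distribution)"
    using assms(1) distr_std_normal_uminus
    by (intro distr_PiM_coordinatewise prob_space_normal_density) (auto simp: f_def distr_id)
  finally show ?thesis .
qed

lemma integrable_std_normal_PiM_prod_power:
  assumes "finite I" "T \<subseteq> I"
  shows "integrable (PiM I (\<lambda>_. std_normal_distribution)) (\<lambda>x. \<Prod>p\<in>T. x p ^ n)"
proof -
  interpret N: prob_space std_normal_distribution
    by (intro prob_space_normal_density) simp
  interpret product_prob_space "\<lambda>_. std_normal_distribution"
    by (intro product_prob_spaceI) unfold_locales
  have int: "integrable std_normal_distribution (\<lambda>z. if i \<in> T then z ^ k else 1)" for i k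
    using integrable_std_normal_distribution_moment[of k] by (cases "i \<in> T") simp_all
  have "integrable (PiM I (\<lambda>_. std_normal_distribution)) (\<lambda>x. \<Prod>i\<in>I. if i \<in> T then x i ^ n else 1)"
    using assms(1) int by (intro product_integrable_prod) auto
  moreover have "(\<Prod>i\<in>I. if i \<in> T then x i ^ n else 1) = (\<Prod>p\<in>T. x p ^ n)" for x :: "'a \<Rightarrow> real"
    using assms by (simp add: prod.If_cases Int_absorb1)
  ultimately show ?thesis by simp
qed

lemma integral_std_normal_PiM_prod_square:
  assumes "finite I" "T \<subseteq> I"
  shows "(\<integral>x. (\<Prod>p\<in>T. x p ^ 2) \<partial>PiM I (\<lambda>_. std_normal_distribution)) = 1"
proof -
  interpret N: prob_space std_normal_distribution
    by (intro prob_space_normal_density) simp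
  interpret product_prob_space "\<lambda>_. std_normal_distribution"
    by (intro product_prob_spaceI) unfold_locales
  have int: "integrable std_normal_distribution (\<lambda>z. if i \<in> T then z ^ k else 1)" for i k
    using integrable_std_normal_distribution_moment[of k] by (cases "i \<in> T") simp_all
  have "(\<integral>x. (\<Prod>i\<in>I. if i \<in> T then x i ^ 2 else 1) \<partial>PiM I (\<lambda>_. std_normal_distribution))
      = (\<Prod>i\<in>I. \<integral>z. (if i \<in> T then z ^ 2 else 1) \<partial>std_normal_distribution)"
    using assms(1) int by (intro product_integral_prod) auto
  also have "\<dots> = 1"
  proof (intro prod.neutral ballI)
    fix i
    show "(\<integral>z. (if i \<in> T then z ^ 2 else 1) \<partial>std_normal_distribution) = 1"
      using std_normal_distribution_even_moments(1)[of 1]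
      by (cases "i \<in> T") (simp_all add: N.prob_space[simplified])
  qed
  moreover have "(\<Prod>i\<in>I. if i \<in> T then x i ^ 2 else 1) = (\<Prod>p\<in>T. x p ^ 2)" for x :: "'a \<Rightarrow> real"
    using assms by (simp add: prod.If_cases Int_absorb1)
  ultimately show ?thesis by simp
qed

section \<open>The Sherrington-Kirkpatrick model\<close>

lemma finite_pairs: "finite (pairs N)"
  by (rule finite_subset[of _ "{1..N} \<times> {1..N}"]) (auto simp: pairs_def)

definition sk_weight_outside ::
    "nat \<Rightarrow> real \<Rightarrow> real \<Rightarrow> (nat \<times> nat) set \<Rightarrow> (nat \<times> nat \<Rightarrow> real) \<Rightarrow> (nat \<Rightarrow> real) \<Rightarrow> real" where
  "sk_weight_outside N \<beta> h T g \<sigma> =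
     exp (\<beta> / sqrt (real N) * (\<Sum>p\<in>pairs N - T. g p * \<sigma> (fst p) * \<sigma> (snd p))
          + h * (\<Sum>i\<in>{1..N}. \<sigma> i))"

lemma sk_weight_split:
  assumes "T \<subseteq> pairs N"
  shows "sk_weight N \<beta> h g \<sigma> = sk_weight_outside N \<beta> h T g \<sigma>
    * exp (\<beta> / sqrt (real N) * (\<Sum>p\<in>T. g p * \<sigma> (fst p) * \<sigma> (snd p)))"
proof -
  have "(\<Sum>p\<in>pairs N. g p * \<sigma> (fst p) * \<sigma> (snd p))
      = (\<Sum>p\<in>pairs N - T. g p * \<sigma> (fst p) * \<sigma> (snd p)) + (\<Sum>p\<in>T. g p * \<sigma> (fst p) * \<sigma> (snd p))"
    using assms finite_pairs by (rule sum.subset_diff)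
  then show ?thesis
    by (simp add: sk_weight_def sk_weight_outside_def exp_add[symmetric] algebra_simps)
qed

lemma field_gibbs_sk:
  assumes "finite K" "j ` K \<subseteq> {2..N}"
  shows "field_gibbs (spins N) (sk_weight_outside N \<beta> h T g) (\<lambda>r \<sigma>. \<sigma> 1 * \<sigma> (j r)) K"
proof
  show "finite (spins N)" by (simp add: spins_def finite_PiE)
  have "(\<lambda>i\<in>{1..N}. 1) \<in> spins N" by (auto simp: spins_def)
  then show "spins N \<noteq> {}" by auto
  show "\<bar>\<sigma> 1 * \<sigma> (j r)\<bar> \<le> 1" if "r \<in> K" "\<sigma> \<in> spins N" for r \<sigma>
  proof -
    have "1 \<in> {1..N}" "j r \<in> {1..N}" using assms(2) that(1) by auto
    then have "\<sigma> 1 \<in> {-1, 1}" "\<sigma> (j r) \<in> {-1, 1}" using that(2) by (auto simp: spins_def)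
    then show ?thesis by auto
  qed
qed (simp_all add: sk_weight_outside_def assms(1))

text \<open>Singling out the couplings \<open>g (1, j r)\<close> with \<open>r \<in> K\<close> turns the SK Gibbs measure into a
  Gibbs measure with external fields \<open>\<beta> / sqrt N * g (1, j r)\<close> coupled to \<open>\<sigma> 1 * \<sigma> (j r)\<close>.\<close>

lemma gibbs_avg_eq_field_avg:
  assumes "finite K" "inj_on j K" "j ` K \<subseteq> {2..N}"
  shows "gibbs_avg N \<beta> h g f = field_gibbs.avg (spins N) (sk_weight_outside N \<beta> h ((\<lambda>r. (1, j r)) ` K) g)
    (\<lambda>r \<sigma>. \<sigma> 1 * \<sigma> (j r)) K (\<lambda>r\<in>K. \<beta> / sqrt (real N) * g (1, j r)) f"
proof -
  let ?T = "(\<lambda>r. (1, j r)) ` K"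
  have "?T \<subseteq> pairs N" using assms(3) by (auto simp: pairs_def)
  moreover have "\<beta> / sqrt (real N) * (\<Sum>p\<in>?T. g p * \<sigma> (fst p) * \<sigma> (snd p))
      = (\<Sum>r\<in>K. (\<lambda>r\<in>K. \<beta> / sqrt (real N) * g (1, j r)) r * (\<sigma> 1 * \<sigma> (j r)))" for \<sigma> :: "nat \<Rightarrow> real"
  proof -
    have "inj_on (\<lambda>r. (1::nat, j r)) K" using assms(2) by (auto simp: inj_on_def)
    then show ?thesis by (simp add: sum.reindex sum_distrib_left mult_ac)
  qed
  ultimately show ?thesis
    unfolding gibbs_avg_def field_gibbs.avg_def[OF field_gibbs_sk[OF assms(1,3)]]
      field_gibbs.weight_def[OF field_gibbs_sk[OF assms(1,3)]]
    by (simp add: sk_weight_split)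
qed

lemma abs_gibbs_avg_le:
  assumes "\<And>\<sigma>. \<sigma> \<in> spins N \<Longrightarrow> \<bar>f \<sigma>\<bar> \<le> 1"
  shows "\<bar>gibbs_avg N \<beta> h g f\<bar> \<le> 1"
  using field_gibbs.abs_avg_le[OF field_gibbs_sk[where K="{}" and j=id and T="{}"] assms]
    gibbs_avg_eq_field_avg[where K="{}" and j=id]
  by simp

lemma abs_prod_gibbs_avg_le:
  assumes "\<And>l \<sigma>. l \<in> L \<Longrightarrow> \<sigma> \<in> spins N \<Longrightarrow> \<bar>b l \<sigma>\<bar> \<le> 1"
  shows "\<bar>\<Prod>l\<in>L. gibbs_avg N \<beta> h g (b l)\<bar> \<le> 1"
  unfolding abs_prod using assms by (intro prod_le_1 conjI abs_ge_zero abs_gibbs_avg_le)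

lemma measurable_prod_gibbs_avg: "(\<lambda>g. \<Prod>l\<in>L. gibbs_avg N \<beta> h g (b l)) \<in> borel_measurable (disorder N)"
  unfolding gibbs_avg_def sk_weight_def disorder_def by measurable

lemma abs_odd_part_sk_gibbs_le:
  assumes "distinct rs" "inj_on j (set rs)" "j ` set rs \<subseteq> {2..N}"
    and "finite L" "\<And>l \<sigma>. l \<in> L \<Longrightarrow> \<sigma> \<in> spins N \<Longrightarrow> \<bar>b l \<sigma>\<bar> \<le> 1"
  shows "\<bar>odd_part (\<lambda>r. flip_coord (1, j r)) rs (\<lambda>g. \<Prod>l\<in>L. gibbs_avg N \<beta> h g (b l)) g\<bar>
    \<le> (2 ^ length rs * gibbs_deriv_bound (length rs)) ^ card L
      * (\<Prod>r\<in>set rs. \<bar>\<beta> / sqrt (real N) * g (1, j r)\<bar>)"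
proof -
  let ?s = "\<lambda>r (\<sigma> :: nat \<Rightarrow> real). \<sigma> 1 * \<sigma> (j r)"
  define w where "w g = sk_weight_outside N \<beta> h ((\<lambda>r. (1, j r)) ` set rs) g" for g
  define y where "y g = (\<lambda>r\<in>set rs. \<beta> / sqrt (real N) * g (1, j r))" for g :: "nat \<times> nat \<Rightarrow> real"
  define \<Phi> where "\<Phi> g z = (\<Prod>l\<in>L. field_gibbs.avg (spins N) (w g) ?s (set rs) z (b l))" for g z
  have gibbs: "field_gibbs (spins N) (w g) ?s (set rs)" for g
    unfolding w_def using assms(3) by (intro field_gibbs_sk) auto
  have "(\<lambda>g. \<Prod>l\<in>L. gibbs_avg N \<beta> h g (b l)) = (\<lambda>g. \<Phi> g (y g))"
    using gibbs_avg_eq_field_avg[OF _ assms(2,3)] by (simp add: \<Phi>_def w_def y_def)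
  then have "odd_part (\<lambda>r. flip_coord (1, j r)) rs (\<lambda>g. \<Prod>l\<in>L. gibbs_avg N \<beta> h g (b l)) g
      = odd_part flip_coord rs (\<Phi> g) (y g)"
  proof (simp only:, intro odd_part_comp)
    fix r g' assume r: "r \<in> set rs"
    have sums: "(\<Sum>p\<in>pairs N - (\<lambda>r. (1, j r)) ` set rs. flip_coord (1, j r) g' p * \<sigma> (fst p) * \<sigma> (snd p))
        = (\<Sum>p\<in>pairs N - (\<lambda>r. (1, j r)) ` set rs. g' p * \<sigma> (fst p) * \<sigma> (snd p))" for \<sigma> :: "nat \<Rightarrow> real"
      using r by (intro sum.cong) (auto simp: flip_coord_def)
    have "w (flip_coord (1, j r) g') = w g'"
      unfolding w_def sk_weight_outside_def by (intro ext) (simp only: sums)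
    then show "\<Phi> (flip_coord (1, j r) g') = \<Phi> g'" by (intro ext) (simp add: \<Phi>_def)
    show "y (flip_coord (1, j r) g') = flip_coord r (y g')"
      using r assms(2) by (auto simp: y_def flip_coord_def inj_on_def fun_eq_iff)
  qed
  also have "\<bar>odd_part flip_coord rs (\<Phi> g) (y g)\<bar>
      \<le> (2 ^ length rs * gibbs_deriv_bound (length rs)) ^ card L * (\<Prod>r\<in>set rs. \<bar>y g r\<bar>)"
    unfolding \<Phi>_def using assms(1,4,5) by (intro field_gibbs.abs_odd_part_prod_avg_le[OF gibbs]) auto
  also have "(\<Prod>r\<in>set rs. \<bar>y g r\<bar>) = (\<Prod>r\<in>set rs. \<bar>\<beta> / sqrt (real N) * g (1, j r)\<bar>)"
    by (simp add: y_def)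
  finally show ?thesis .
qed

lemma edge_prod_mult_odd_part_sk_gibbs_le:
  assumes "distinct rs" "inj_on j (set rs)" "j ` set rs \<subseteq> {2..N}" "0 \<le> \<beta>"
    and "finite L" "\<And>l \<sigma>. l \<in> L \<Longrightarrow> \<sigma> \<in> spins N \<Longrightarrow> \<bar>b l \<sigma>\<bar> \<le> 1"
  shows "(\<Prod>r\<in>set rs. g (1, j r)) * odd_part (\<lambda>r. flip_coord (1, j r)) rs (\<lambda>g. \<Prod>l\<in>L. gibbs_avg N \<beta> h g (b l)) g
    \<le> (2 ^ length rs * gibbs_deriv_bound (length rs)) ^ card L * (\<beta> / sqrt (real N)) ^ length rs
      * (\<Prod>r\<in>set rs. g (1, j r) ^ 2)"
proof -
  let ?X = "\<Prod>r\<in>set rs. g (1, j r)"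
  let ?D = "odd_part (\<lambda>r. flip_coord (1, j r)) rs (\<lambda>g. \<Prod>l\<in>L. gibbs_avg N \<beta> h g (b l)) g"
  let ?C = "(2 ^ length rs * gibbs_deriv_bound (length rs)) ^ card L"
  have "?X * ?D \<le> \<bar>?X\<bar> * \<bar>?D\<bar>" by (simp add: abs_mult[symmetric])
  also have "\<dots> \<le> \<bar>?X\<bar> * (?C * (\<Prod>r\<in>set rs. \<bar>\<beta> / sqrt (real N) * g (1, j r)\<bar>))"
    using abs_odd_part_sk_gibbs_le[OF assms(1-3,5,6)] by (intro mult_left_mono) auto
  also have "(\<Prod>r\<in>set rs. \<bar>\<beta> / sqrt (real N) * g (1, j r)\<bar>)
      = (\<beta> / sqrt (real N)) ^ length rs * (\<Prod>r\<in>set rs. \<bar>g (1, j r)\<bar>)"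
  proof -
    have "\<bar>\<beta> / sqrt (real N) * x\<bar> = \<beta> / sqrt (real N) * \<bar>x\<bar>" for x
      using assms(4) by (simp add: abs_mult)
    then show ?thesis by (simp only: prod.distrib prod_constant distinct_card[OF assms(1)])
  qed
  also have "\<bar>?X\<bar> * (?C * ((\<beta> / sqrt (real N)) ^ length rs * (\<Prod>r\<in>set rs. \<bar>g (1, j r)\<bar>)))
      = ?C * (\<beta> / sqrt (real N)) ^ length rs * ((\<Prod>r\<in>set rs. \<bar>g (1, j r)\<bar>) * (\<Prod>r\<in>set rs. \<bar>g (1, j r)\<bar>))"
    by (simp add: abs_prod mult_ac)
  also have "(\<Prod>r\<in>set rs. \<bar>g (1, j r)\<bar>) * (\<Prod>r\<in>set rs. \<bar>g (1, j r)\<bar>) = (\<Prod>r\<in>set rs. g (1, j r) ^ 2)"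
    by (simp add: prod.distrib[symmetric] power2_eq_square abs_mult_self_eq)
  finally show ?thesis .
qed

lemma integrable_disorder_edge_prod:
  assumes "inj_on j K" "j ` K \<subseteq> {2..N}"
  shows "integrable (disorder N) (\<lambda>g. \<Prod>r\<in>K. g (1, j r) ^ n)"
proof -
  have "inj_on (\<lambda>r. (1::nat, j r)) K" using assms(1) by (auto simp: inj_on_def)
  moreover have "(\<lambda>r. (1, j r)) ` K \<subseteq> pairs N" using assms(2) by (auto simp: pairs_def)
  ultimately show ?thesis
    using integrable_std_normal_PiM_prod_power[OF finite_pairs, of "(\<lambda>r. (1, j r)) ` K" N n]
    by (simp add: disorder_def prod.reindex)
qed

lemma integral_disorder_edge_prod_square:
  assumes "inj_on j K" "j ` K \<subseteq> {2..N}"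
  shows "(\<integral>g. (\<Prod>r\<in>K. g (1, j r) ^ 2) \<partial>disorder N) = 1"
proof -
  have "inj_on (\<lambda>r. (1::nat, j r)) K" using assms(1) by (auto simp: inj_on_def)
  moreover have "(\<lambda>r. (1, j r)) ` K \<subseteq> pairs N" using assms(2) by (auto simp: pairs_def)
  ultimately show ?thesis
    using integral_std_normal_PiM_prod_square[OF finite_pairs, of "(\<lambda>r. (1, j r)) ` K" N]
    by (simp add: disorder_def prod.reindex)
qed

lemma integral_edge_prod_mult_odd_part:
  assumes "distinct rs" "inj_on j (set rs)" "j ` set rs \<subseteq> {2..N}"
    and "G \<in> borel_measurable (disorder N)" "\<And>g. \<bar>G g\<bar> \<le> 1"
  shows "(\<integral>g. (\<Prod>r\<in>set rs. g (1, j r)) * odd_part (\<lambda>r. flip_coord (1, j r)) rs G g \<partial>disorder N)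
    = (\<integral>g. (\<Prod>r\<in>set rs. g (1, j r)) * G g \<partial>disorder N)"
proof (rule integral_mult_odd_part[OF _ _ _ _ assms(4,5)])
  fix r assume "r \<in> set rs"
  then have q: "(1, j r) \<in> pairs N" using assms(3) by (auto simp: pairs_def)
  show "flip_coord (1, j r) \<in> measurable (disorder N) (disorder N)"
    unfolding disorder_def by (rule measurable_flip_coord[OF q])
  show "distr (disorder N) (disorder N) (flip_coord (1, j r)) = disorder N"
    unfolding disorder_def by (rule distr_flip_coord_std_normal_PiM[OF finite_pairs q])
  show "(\<Prod>r'\<in>set rs. flip_coord (1, j r) g (1, j r')) = - (\<Prod>r'\<in>set rs. g (1, j r'))" for g
    using prod_flip_coord_reindex[of "set rs" "\<lambda>r. (1, j r)"] \<open>r \<in> set rs\<close> assms(2)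
    by (simp add: inj_on_def)
next
  show "integrable (disorder N) (\<lambda>g. \<Prod>r\<in>set rs. g (1, j r))"
    using integrable_disorder_edge_prod[OF assms(2,3), of 1] by simp
qed

lemma integral_edge_prod_mult_prod_gibbs_avg_le:
  assumes "distinct rs" "inj_on j (set rs)" "j ` set rs \<subseteq> {2..N}" "0 \<le> \<beta>"
    and "finite L" "\<And>l \<sigma>. l \<in> L \<Longrightarrow> \<sigma> \<in> spins N \<Longrightarrow> \<bar>b l \<sigma>\<bar> \<le> 1"
  shows "(\<integral>g. (\<Prod>r\<in>set rs. g (1, j r)) * (\<Prod>l\<in>L. gibbs_avg N \<beta> h g (b l)) \<partial>disorder N)
    \<le> (2 ^ length rs * gibbs_deriv_bound (length rs)) ^ card L * (\<beta> / sqrt (real N)) ^ length rs"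
proof -
  let ?F = "\<lambda>g. \<Prod>l\<in>L. gibbs_avg N \<beta> h g (b l)"
  let ?C = "(2 ^ length rs * gibbs_deriv_bound (length rs)) ^ card L * (\<beta> / sqrt (real N)) ^ length rs"
  have "(\<integral>g. (\<Prod>r\<in>set rs. g (1, j r)) * ?F g \<partial>disorder N)
      = (\<integral>g. (\<Prod>r\<in>set rs. g (1, j r)) * odd_part (\<lambda>r. flip_coord (1, j r)) rs ?F g \<partial>disorder N)"
    using integral_edge_prod_mult_odd_part[OF assms(1-3) measurable_prod_gibbs_avg
        abs_prod_gibbs_avg_le[where L=L and b=b, OF assms(6)]]
    by simp
  also have "\<dots> \<le> (\<integral>g. ?C * (\<Prod>r\<in>set rs. g (1, j r) ^ 2) \<partial>disorder N)"
  proof (rule integral_mono')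
    show "integrable (disorder N) (\<lambda>g. ?C * (\<Prod>r\<in>set rs. g (1, j r) ^ 2))"
      using integrable_disorder_edge_prod[OF assms(2,3)] by simp
    show "(\<Prod>r\<in>set rs. g (1, j r)) * odd_part (\<lambda>r. flip_coord (1, j r)) rs ?F g
        \<le> ?C * (\<Prod>r\<in>set rs. g (1, j r) ^ 2)" for g
      by (rule edge_prod_mult_odd_part_sk_gibbs_le[OF assms])
    show "0 \<le> ?C * (\<Prod>r\<in>set rs. g (1, j r) ^ 2)" for g
      using assms(4) one_le_gibbs_deriv_bound[of "length rs"] by (simp add: prod_nonneg)
  qed
  also have "\<dots> = ?C"
    using integral_disorder_edge_prod_square[OF assms(2,3)] by simp
  finally show ?thesis .
qed

theorem lemma3p2:
  fixes m k :: nat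
  assumes "k \<ge> 1"
  shows "\<exists>C::real. \<forall>(N::nat) (\<beta>::real) (h::real) (j::nat \<Rightarrow> nat)
                      (b::nat \<Rightarrow> (nat \<Rightarrow> real) \<Rightarrow> real).
           \<beta> > 0 \<longrightarrow> inj_on j {1..k} \<longrightarrow> j ` {1..k} \<subseteq> {2..N} \<longrightarrow>
           (\<forall>l\<in>{1..m}. \<forall>\<sigma>\<in>spins N. b l \<sigma> \<in> {-1..1}) \<longrightarrow>
           (\<integral>g. (\<Prod>r\<in>{1..k}. g (1, j r)) * (\<Prod>l\<in>{1..m}. gibbs_avg N \<beta> h g (b l)) \<partial>disorder N)
             \<le> C * \<beta> ^ k / real N powr (real k / 2)"
proof (intro exI[of _ "(2 ^ k * gibbs_deriv_bound k) ^ m"] allI impI)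
  fix N :: nat and \<beta> h :: real and j :: "nat \<Rightarrow> nat" and b :: "nat \<Rightarrow> (nat \<Rightarrow> real) \<Rightarrow> real"
  assume \<beta>: "\<beta> > 0" and j: "inj_on j {1..k}" "j ` {1..k} \<subseteq> {2..N}"
    and b: "\<forall>l\<in>{1..m}. \<forall>\<sigma>\<in>spins N. b l \<sigma> \<in> {-1..1}"
  define rs where "rs = [1..<Suc k]"
  have rs: "distinct rs" "set rs = {1..k}" "length rs = k" by (auto simp: rs_def)
  have "j 1 \<in> {2..N}" using j(2) \<open>k \<ge> 1\<close> by (auto simp: image_subset_iff)
  then have "(\<beta> / sqrt (real N)) ^ k = \<beta> ^ k / real N powr (real k / 2)"
    by (simp add: power_divide powr_half_sqrt[symmetric] powr_power)
  moreover have "(\<integral>g. (\<Prod>r\<in>{1..k}. g (1, j r)) * (\<Prod>l\<in>{1..m}. gibbs_avg N \<beta> h g (b l)) \<partial>disorder N)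
      \<le> (2 ^ k * gibbs_deriv_bound k) ^ m * (\<beta> / sqrt (real N)) ^ k"
    using integral_edge_prod_mult_prod_gibbs_avg_le[of rs j N \<beta> "{1..m}" b h] j rs b \<beta>
    by (auto simp: abs_le_iff)
  ultimately show "(\<integral>g. (\<Prod>r\<in>{1..k}. g (1, j r)) * (\<Prod>l\<in>{1..m}. gibbs_avg N \<beta> h g (b l)) \<partial>disorder N)
      \<le> (2 ^ k * gibbs_deriv_bound k) ^ m * \<beta> ^ k / real N powr (real k / 2)"
    by simp
qed

end
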